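(* Let $E$ be a Hilbert space and $\Omega$ the set of positive definite bounded operators on $E$ with the Thompson metric $d$. For each $n\in\mathbb{N}$ there exists $\rho_n$ with $0<\rho_n<1$ such that the arithmetic mean $A(X,Y)=(X+Y)/2$ and the harmonic mean $H(X,Y)=2(X^{-1}+Y^{-1})^{-1}$ are coordinatewise $\rho_n$-contractive and nonexpansive on the order interval $[(1/n)I,nI]\subseteq\Omega$.
   Context: Loewner order: $A\le B$ iff $B-A$ is positive semidefinite; $[A,B]=\{X:A\le X\le B\}$; $I$ is the identity operator. Thompson metric: $d(A,B)=\max\{\log M(A/B),\log M(B/A)\}$ with $M(A/B)=\inf\{\lambda>0:A\le\lambda B\}$. A 2-mean $\mu$ on a set $S$ is nonexpansive if $d(\mu(x_1,x_2),\mu(y_1,y_2))\le\max\{d(x_1,y_1),d(x_2,y_2)\}$ and coordinatewise $\rho$-contractive if $d(\mu(\mathbf{x}),\mu(\mathbf{y}))\le\rho\,d(x_j,y_j)$ whenever $\mathbf{x},\mathbf{y}\in S^2$ differ only in coordinate $j$. *)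

theory Defs
  imports "HOL-Analysis.Analysis"
begin

text \<open>Bounded operators on a (real) Hilbert space 'a :: {real_inner, complete_space}.\<close>

definition self_adjoint_op :: "('a::real_inner \<Rightarrow>\<^sub>L 'a) \<Rightarrow> bool" where
  "self_adjoint_op T \<longleftrightarrow> (\<forall>x y. inner (blinfun_apply T x) y = inner x (blinfun_apply T y))"

definition psd_op :: "('a::real_inner \<Rightarrow>\<^sub>L 'a) \<Rightarrow> bool" where
  "psd_op T \<longleftrightarrow> self_adjoint_op T \<and> (\<forall>x. 0 \<le> inner (blinfun_apply T x) x)"

text \<open>Positive definite (= positive and invertible) bounded operators.\<close>
definition pos_def_op :: "('a::real_inner \<Rightarrow>\<^sub>L 'a) \<Rightarrow> bool" where
  "pos_def_op T \<longleftrightarrow> self_adjoint_op T \<and>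
     (\<exists>c>0. \<forall>x. c * (norm x)\<^sup>2 \<le> inner (blinfun_apply T x) x)"

definition Omega :: "('a::real_inner \<Rightarrow>\<^sub>L 'a) set" where
  "Omega = {T. pos_def_op T}"

definition loewner_le :: "('a::real_inner \<Rightarrow>\<^sub>L 'a) \<Rightarrow> ('a \<Rightarrow>\<^sub>L 'a) \<Rightarrow> bool" where
  "loewner_le A B \<longleftrightarrow> psd_op (B - A)"

definition order_interval :: "('a::real_inner \<Rightarrow>\<^sub>L 'a) \<Rightarrow> ('a \<Rightarrow>\<^sub>L 'a) \<Rightarrow> ('a \<Rightarrow>\<^sub>L 'a) set" where
  "order_interval A B = {X. loewner_le A X \<and> loewner_le X B}"

definition M_op :: "('a::real_inner \<Rightarrow>\<^sub>L 'a) \<Rightarrow> ('a \<Rightarrow>\<^sub>L 'a) \<Rightarrow> real" where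
  "M_op A B = Inf {t::real. t > 0 \<and> loewner_le A (t *\<^sub>R B)}"

definition thompson :: "('a::real_inner \<Rightarrow>\<^sub>L 'a) \<Rightarrow> ('a \<Rightarrow>\<^sub>L 'a) \<Rightarrow> real" where
  "thompson A B = max (ln (M_op A B)) (ln (M_op B A))"

definition op_inv :: "('a::real_normed_vector \<Rightarrow>\<^sub>L 'a) \<Rightarrow> ('a \<Rightarrow>\<^sub>L 'a)" where
  "op_inv A = (THE B. B o\<^sub>L A = id_blinfun \<and> A o\<^sub>L B = id_blinfun)"

definition arith_mean :: "('a::real_normed_vector \<Rightarrow>\<^sub>L 'a) \<Rightarrow> ('a \<Rightarrow>\<^sub>L 'a) \<Rightarrow> ('a \<Rightarrow>\<^sub>L 'a)" where
  "arith_mean X Y = (1/2) *\<^sub>R (X + Y)"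

definition harm_mean :: "('a::real_normed_vector \<Rightarrow>\<^sub>L 'a) \<Rightarrow> ('a \<Rightarrow>\<^sub>L 'a) \<Rightarrow> ('a \<Rightarrow>\<^sub>L 'a)" where
  "harm_mean X Y = 2 *\<^sub>R op_inv (op_inv X + op_inv Y)"

definition nonexpansive_mean ::
  "('a::real_inner \<Rightarrow>\<^sub>L 'a) set \<Rightarrow> (('a \<Rightarrow>\<^sub>L 'a) \<Rightarrow> ('a \<Rightarrow>\<^sub>L 'a) \<Rightarrow> ('a \<Rightarrow>\<^sub>L 'a)) \<Rightarrow> bool" where
  "nonexpansive_mean S \<mu> \<longleftrightarrow> (\<forall>x1\<in>S. \<forall>x2\<in>S. \<forall>y1\<in>S. \<forall>y2\<in>S.
      thompson (\<mu> x1 x2) (\<mu> y1 y2) \<le> max (thompson x1 y1) (thompson x2 y2))"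

definition coord_contractive_mean ::
  "real \<Rightarrow> ('a::real_inner \<Rightarrow>\<^sub>L 'a) set \<Rightarrow> (('a \<Rightarrow>\<^sub>L 'a) \<Rightarrow> ('a \<Rightarrow>\<^sub>L 'a) \<Rightarrow> ('a \<Rightarrow>\<^sub>L 'a)) \<Rightarrow> bool" where
  "coord_contractive_mean \<rho> S \<mu> \<longleftrightarrow>
     (\<forall>x\<in>S. \<forall>y\<in>S. \<forall>z\<in>S.
        thompson (\<mu> x z) (\<mu> y z) \<le> \<rho> * thompson x y \<and>
        thompson (\<mu> z x) (\<mu> z y) \<le> \<rho> * thompson x y)"

end

theory Submission
  imports Defs
begin

text \<open>
  If \<open>X, Y\<close> lie in \<open>[c I, d I]\<close> then \<open>X \<le> a Y\<close> with \<open>a = d / c\<close>, and for positive operators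
  \<open>d(X, Y) \<le> r\<close> means \<open>X \<le> e\<^sup>r Y\<close> and \<open>Y \<le> e\<^sup>r X\<close>. If \<open>X \<le> t Y\<close> and \<open>Y \<le> a Z\<close> with
  \<open>1 \<le> t \<le> a\<close>, then \<open>X + Z \<le> l (Y + Z)\<close> for \<open>l = (a t + 1) / (a + 1)\<close>, and \<open>ln x \<le> x - 1\<close>
  gives \<open>ln l \<le> (1 - 1 / ((a + 1) a)) ln t\<close>. Taking \<open>t = min (e\<^bsup>d(X, Y)\<^esup>) a\<close> shows that
  \<open>X \<mapsto> X + Z\<close>, hence the arithmetic mean, contracts \<open>d\<close> by \<open>\<rho> = 1 - 1 / ((a + 1) a)\<close>; for
  \<open>[I / n, n I]\<close> one has \<open>a = n\<^sup>2\<close>. Inversion reverses the Loewner order, hence preserves \<open>d\<close>,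
  and maps \<open>[c I, d I]\<close> onto \<open>[I / d, I / c]\<close> with the same ratio \<open>a\<close>, so the harmonic mean
  \<open>2 (X\<inverse> + Z\<inverse>)\<inverse>\<close> contracts by the same factor. Nonexpansiveness of both means is additivity
  of the Loewner order. Positive definite operators are invertible by the Lax--Milgram argument:
  \<open>x \<mapsto> x - t (T x - y)\<close> is a contraction for small \<open>t > 0\<close>.
\<close>

subsection \<open>Quadratic forms and the Loewner order\<close>

definition qform :: "('a::real_inner \<Rightarrow>\<^sub>L 'a) \<Rightarrow> 'a \<Rightarrow> real" where
  "qform T x = inner (T x) x"

lemma qform_add [simp]: "qform (A + B) x = qform A x + qform B x"
  by (simp add: qform_def blinfun.add_left inner_add_left)

lemma qform_diff [simp]: "qform (A - B) x = qform A x - qform B x"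
  by (simp add: qform_def blinfun.diff_left inner_diff_left)

lemma qform_scaleR [simp]: "qform (c *\<^sub>R A) x = c * qform A x"
  by (simp add: qform_def blinfun.scaleR_left)

lemma qform_id [simp]: "qform id_blinfun x = (norm x)\<^sup>2"
  by (simp add: qform_def power2_norm_eq_inner)

lemma self_adjoint_op_add: "self_adjoint_op A \<Longrightarrow> self_adjoint_op B \<Longrightarrow> self_adjoint_op (A + B)"
  by (simp add: self_adjoint_op_def blinfun.add_left inner_add_left inner_add_right)

lemma self_adjoint_op_diff: "self_adjoint_op A \<Longrightarrow> self_adjoint_op B \<Longrightarrow> self_adjoint_op (A - B)"
  by (simp add: self_adjoint_op_def blinfun.diff_left inner_diff_left inner_diff_right)

lemma self_adjoint_op_scaleR: "self_adjoint_op A \<Longrightarrow> self_adjoint_op (c *\<^sub>R A)"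
  by (simp add: self_adjoint_op_def blinfun.scaleR_left)

lemma self_adjoint_op_id: "self_adjoint_op id_blinfun"
  by (simp add: self_adjoint_op_def)

lemma psd_op_iff_qform: "psd_op T \<longleftrightarrow> self_adjoint_op T \<and> (\<forall>x. 0 \<le> qform T x)"
  by (simp add: psd_op_def qform_def)

lemma psd_op_add: "psd_op A \<Longrightarrow> psd_op B \<Longrightarrow> psd_op (A + B)"
  by (simp add: psd_op_iff_qform self_adjoint_op_add)

lemma psd_op_scaleR: "0 \<le> c \<Longrightarrow> psd_op A \<Longrightarrow> psd_op (c *\<^sub>R A)"
  by (simp add: psd_op_iff_qform self_adjoint_op_scaleR)

lemma psd_op_self_adjoint: "psd_op A \<Longrightarrow> self_adjoint_op A"
  by (simp add: psd_op_def)

lemma pos_def_op_iff_qform: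
  "pos_def_op T \<longleftrightarrow> self_adjoint_op T \<and> (\<exists>c>0. \<forall>x. c * (norm x)\<^sup>2 \<le> qform T x)"
  by (simp add: pos_def_op_def qform_def)

lemma pos_def_op_psd: "pos_def_op A \<Longrightarrow> psd_op A"
  unfolding pos_def_op_iff_qform psd_op_iff_qform
  by (meson order_trans mult_nonneg_nonneg less_imp_le zero_le_power2)

lemma loewner_le_iff_qform:
  "self_adjoint_op A \<Longrightarrow> self_adjoint_op B \<Longrightarrow> loewner_le A B \<longleftrightarrow> (\<forall>x. qform A x \<le> qform B x)"
  by (simp add: loewner_le_def psd_op_iff_qform self_adjoint_op_diff)

lemma loewner_le_qform: "loewner_le A B \<Longrightarrow> qform A x \<le> qform B x"
  using qform_diff[of B A x] by (simp add: loewner_le_def psd_op_iff_qform)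

lemma loewner_le_trans [trans]: "loewner_le A B \<Longrightarrow> loewner_le B C \<Longrightarrow> loewner_le A C"
  unfolding loewner_le_def using psd_op_add[of "C - B" "B - A"] by simp

lemma loewner_le_add: "loewner_le A B \<Longrightarrow> loewner_le C D \<Longrightarrow> loewner_le (A + C) (B + D)"
  unfolding loewner_le_def using psd_op_add[of "B - A" "D - C"] by (simp add: algebra_simps)

lemma loewner_le_scaleR: "0 \<le> c \<Longrightarrow> loewner_le A B \<Longrightarrow> loewner_le (c *\<^sub>R A) (c *\<^sub>R B)"
  unfolding loewner_le_def using psd_op_scaleR[of c "B - A"] by (simp add: scaleR_diff_right)

lemma loewner_le_scaleR_left_mono:
  "s \<le> t \<Longrightarrow> psd_op B \<Longrightarrow> loewner_le (s *\<^sub>R B) (t *\<^sub>R B)"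
  unfolding loewner_le_def using psd_op_scaleR[of "t - s" B] by (simp add: scaleR_diff_left)

lemma pos_def_op_id: "pos_def_op id_blinfun"
  unfolding pos_def_op_iff_qform by (auto simp: self_adjoint_op_id intro: exI[of _ 1])

lemma loewner_le_norm_id:
  assumes "self_adjoint_op A"
  shows "loewner_le A (norm A *\<^sub>R id_blinfun)"
proof -
  have "qform A x \<le> norm A * (norm x)\<^sup>2" for x
  proof -
    have "qform A x \<le> norm (A x) * norm x" unfolding qform_def by (rule norm_cauchy_schwarz)
    also have "\<dots> \<le> norm A * norm x * norm x" by (intro mult_right_mono norm_blinfun) simp
    finally show ?thesis by (simp add: power2_eq_square mult.assoc)
  qed
  then show ?thesis
    using assms by (simp add: loewner_le_iff_qform self_adjoint_op_scaleR self_adjoint_op_id)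
qed

subsection \<open>Inverses of positive definite operators\<close>

lemma op_inv_eqI:
  assumes "B o\<^sub>L T = id_blinfun" "T o\<^sub>L B = id_blinfun"
  shows "op_inv T = B"
  unfolding op_inv_def
proof (rule the_equality)
  fix B' assume "B' o\<^sub>L T = id_blinfun \<and> T o\<^sub>L B' = id_blinfun"
  then have "B' (T (B y)) = B y" "T (B y) = y" for y
    using assms by (metis blinfun_apply_blinfun_compose blinfun_apply_id_blinfun)+
  then show "B' = B" by (metis blinfun_eqI)
qed (use assms in blast)

lemma coercive_op_norm_ge:
  assumes "\<And>x. c * (norm x)\<^sup>2 \<le> qform T x"
  shows "c * norm x \<le> norm (T x)"
proof (cases "x = 0")
  case False
  have "c * norm x * norm x \<le> norm (T x) * norm x"
    using assms[of x] norm_cauchy_schwarz[of "T x" x]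
    by (simp add: qform_def power2_eq_square mult.assoc)
  then show ?thesis using False by simp
qed simp

lemma coercive_op_shift_contraction:
  assumes c: "0 < c" and coercive: "\<And>x. c * (norm x)\<^sup>2 \<le> qform T x"
    and K: "c \<le> K" "norm T \<le> K"
  shows "norm (v - (c / K\<^sup>2) *\<^sub>R T v) \<le> sqrt (1 - c\<^sup>2 / K\<^sup>2) * norm v"
proof -
  define t where "t = c / K\<^sup>2"
  have "0 < K" "c\<^sup>2 / K\<^sup>2 \<le> 1" using c K by (simp_all add: power_mono)
  have "norm (T v) \<le> K * norm v"
    using norm_blinfun[of T v] K by (meson mult_right_mono norm_ge_zero order_trans)
  then have "t\<^sup>2 * (norm (T v))\<^sup>2 \<le> t\<^sup>2 * (K * norm v)\<^sup>2"
    by (simp add: power_mono mult_left_mono)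
  moreover have "(norm (v - t *\<^sub>R T v))\<^sup>2 = (norm v)\<^sup>2 - 2 * t * qform T v + t\<^sup>2 * (norm (T v))\<^sup>2"
    unfolding power2_norm_eq_inner qform_def
    by (simp add: inner_commute[of v "T v"] power2_eq_square algebra_simps)
  moreover have "t * (c * (norm v)\<^sup>2) \<le> t * qform T v"
    using coercive[of v] c unfolding t_def by (intro mult_left_mono) auto
  ultimately have "(norm (v - t *\<^sub>R T v))\<^sup>2 \<le> (norm v)\<^sup>2 - 2 * t * (c * (norm v)\<^sup>2) + t\<^sup>2 * (K * norm v)\<^sup>2"
    by linarith
  also have "\<dots> = (1 - 2 * (t * c) + t\<^sup>2 * K\<^sup>2) * (norm v)\<^sup>2"
    by (simp add: algebra_simps)
  also have "t * c = c\<^sup>2 / K\<^sup>2"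
    unfolding t_def by (simp add: power2_eq_square)
  also have "t\<^sup>2 * K\<^sup>2 = c\<^sup>2 / K\<^sup>2"
    using \<open>0 < K\<close> unfolding t_def by (simp add: power2_eq_square)
  also have "(1 - 2 * (c\<^sup>2 / K\<^sup>2) + c\<^sup>2 / K\<^sup>2) * (norm v)\<^sup>2 = (sqrt (1 - c\<^sup>2 / K\<^sup>2) * norm v)\<^sup>2"
    using \<open>c\<^sup>2 / K\<^sup>2 \<le> 1\<close> by (simp add: power_mult_distrib)
  finally show ?thesis
    unfolding t_def by (rule power2_le_imp_le) (use \<open>c\<^sup>2 / K\<^sup>2 \<le> 1\<close> in simp)
qed

lemma coercive_op_surj:
  fixes T :: "'a::{real_inner,complete_space} \<Rightarrow>\<^sub>L 'a"
  assumes c: "0 < c" and coercive: "\<And>x. c * (norm x)\<^sup>2 \<le> qform T x"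
  shows "surj (blinfun_apply T)"
proof -
  define K where "K = norm T + c"
  define q where "q = sqrt (1 - c\<^sup>2 / K\<^sup>2)"
  have K: "c \<le> K" "norm T \<le> K" "0 < K" unfolding K_def using c norm_ge_zero[of T] by linarith+
  then have q: "0 \<le> q" "q < 1" unfolding q_def using c by (auto simp: power_mono)
  have "\<exists>x. T x = y" for y
  proof -
    define f where "f x = x - (c / K\<^sup>2) *\<^sub>R (T x - y)" for x
    have "dist (f x) (f z) \<le> q * dist x z" for x z
      using coercive_op_shift_contraction[OF c coercive K(1,2), of "x - z"]
      by (simp add: f_def q_def dist_norm blinfun.diff_right algebra_simps)
    then obtain x where "f x = x" using banach_fix_type[OF q] by blast
    then show ?thesis using c K unfolding f_def by auto
  qed
  then show ?thesis unfolding surj_def by metis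
qed

lemma pos_def_op_invertible:
  fixes T :: "'a::{real_inner,complete_space} \<Rightarrow>\<^sub>L 'a"
  assumes "pos_def_op T"
  obtains B where "B o\<^sub>L T = id_blinfun" "T o\<^sub>L B = id_blinfun"
proof -
  obtain c where c: "0 < c" "\<And>x. c * (norm x)\<^sup>2 \<le> qform T x"
    using assms by (auto simp: pos_def_op_iff_qform)
  have surj: "surj (blinfun_apply T)" by (rule coercive_op_surj[OF c])
  have inj: "inj (blinfun_apply T)"
  proof (rule injI)
    fix x z assume "T x = T z"
    then show "x = z"
      using coercive_op_norm_ge[OF c(2), of "x - z"] c(1) by (simp add: blinfun.diff_right mult_le_0_iff)
  qed
  define g where "g = inv (blinfun_apply T)"
  have Tg: "T (g y) = y" and gT: "g (T x) = x" for x y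
    unfolding g_def using surj inj by (auto simp: surj_f_inv_f)
  have "g (y + z) = g y + g z" "g (r *\<^sub>R y) = r *\<^sub>R g y" for r y z
    by (auto intro: injD[OF inj] simp: Tg blinfun.add_right blinfun.scaleR_right)
  moreover have "norm (g y) \<le> norm y * (1 / c)" for y
    using coercive_op_norm_ge[OF c(2), of "g y"] c(1) by (simp add: Tg field_simps)
  ultimately have "bounded_linear g"
    by (intro bounded_linear_intro)
  then have "blinfun_apply (Blinfun g) = g" by (rule bounded_linear_Blinfun_apply)
  then show thesis by (intro that[of "Blinfun g"] blinfun_eqI) (simp_all add: Tg gT)
qed

lemma pos_def_op_inverse:
  fixes T :: "'a::{real_inner,complete_space} \<Rightarrow>\<^sub>L 'a"
  assumes "pos_def_op T"
  shows op_inv_apply_cancel [simp]: "op_inv T (T x) = x"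
    and apply_op_inv_cancel [simp]: "T (op_inv T x) = x"
proof -
  obtain B where "B o\<^sub>L T = id_blinfun" "T o\<^sub>L B = id_blinfun"
    using pos_def_op_invertible[OF assms] .
  then show "op_inv T (T x) = x" "T (op_inv T x) = x"
    using op_inv_eqI by (metis blinfun_apply_blinfun_compose blinfun_apply_id_blinfun)+
qed

lemma pos_def_op_scaleR:
  assumes "0 < c" "pos_def_op A"
  shows "pos_def_op (c *\<^sub>R A)"
proof -
  obtain c0 where "self_adjoint_op A" "0 < c0" "\<forall>x. c0 * (norm x)\<^sup>2 \<le> qform A x"
    using assms(2) by (auto simp: pos_def_op_iff_qform)
  then show ?thesis
    using assms(1) unfolding pos_def_op_iff_qform
    by (auto simp: self_adjoint_op_scaleR mult.assoc intro!: exI[of _ "c * c0"] mult_left_mono)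
qed

lemma pos_def_op_add_psd: "pos_def_op A \<Longrightarrow> psd_op B \<Longrightarrow> pos_def_op (A + B)"
  unfolding pos_def_op_iff_qform psd_op_iff_qform
  by (auto simp: self_adjoint_op_add intro: add_increasing2)

lemma op_inv_id: "op_inv id_blinfun = id_blinfun"
  by (rule op_inv_eqI) (auto intro: blinfun_eqI)

lemma op_inv_scaleR:
  fixes A :: "'a::{real_inner,complete_space} \<Rightarrow>\<^sub>L 'a"
  assumes "pos_def_op A" "0 < c"
  shows "op_inv (c *\<^sub>R A) = (1 / c) *\<^sub>R op_inv A"
  by (rule op_inv_eqI) (use assms in \<open>auto intro!: blinfun_eqI simp: blinfun.scaleR_left blinfun.scaleR_right\<close>)

lemma op_inv_self_adjoint:
  fixes A :: "'a::{real_inner,complete_space} \<Rightarrow>\<^sub>L 'a"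
  assumes "pos_def_op A"
  shows "self_adjoint_op (op_inv A)"
  unfolding self_adjoint_op_def
proof (intro allI)
  fix x y
  have "inner (A u) v = inner u (A v)" for u v
    using assms by (simp add: pos_def_op_def self_adjoint_op_def)
  from this[of "op_inv A x" "op_inv A y"]
  show "inner (op_inv A x) y = inner x (op_inv A y)" using assms by simp
qed

text \<open>The quadratic form of \<open>A\<inverse>\<close> at \<open>x\<close> is the maximum of \<open>y \<mapsto> 2\<langle>x, y\<rangle> - \<langle>A y, y\<rangle>\<close>,
  attained at \<open>y = A\<inverse> x\<close>.\<close>
lemma qform_op_inv_ge:
  fixes A :: "'a::{real_inner,complete_space} \<Rightarrow>\<^sub>L 'a"
  assumes "pos_def_op A"
  shows "2 * inner x y - qform A y \<le> qform (op_inv A) x"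
proof -
  have sa: "inner (A u) v = inner u (A v)" for u v
    using assms by (simp add: pos_def_op_def self_adjoint_op_def)
  have "0 \<le> qform A (y - op_inv A x)"
    using pos_def_op_psd[OF assms] by (simp add: psd_op_iff_qform)
  also have "qform A (y - op_inv A x) = qform A y - 2 * inner x y + qform (op_inv A) x"
    using assms sa[of y "op_inv A x"]
    by (simp add: qform_def blinfun.diff_right inner_diff_left inner_diff_right inner_commute)
  finally show ?thesis by simp
qed

lemma qform_op_inv_eq:
  fixes A :: "'a::{real_inner,complete_space} \<Rightarrow>\<^sub>L 'a"
  assumes "pos_def_op A"
  shows "qform (op_inv A) x = 2 * inner x (op_inv A x) - qform A (op_inv A x)"
  using assms by (simp add: qform_def inner_commute)

lemma op_inv_antimono:
  fixes A B :: "'a::{real_inner,complete_space} \<Rightarrow>\<^sub>L 'a"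
  assumes A: "pos_def_op A" and B: "pos_def_op B" and "loewner_le A B"
  shows "loewner_le (op_inv B) (op_inv A)"
proof -
  have "qform (op_inv B) x \<le> qform (op_inv A) x" for x
  proof -
    have "qform (op_inv B) x \<le> 2 * inner x (op_inv B x) - qform A (op_inv B x)"
      using qform_op_inv_eq[OF B] loewner_le_qform[OF \<open>loewner_le A B\<close>] by simp
    also have "\<dots> \<le> qform (op_inv A) x" by (rule qform_op_inv_ge[OF A])
    finally show ?thesis .
  qed
  then show ?thesis by (simp add: loewner_le_iff_qform op_inv_self_adjoint A B)
qed

lemma op_inv_antimono_scaleR:
  fixes A B :: "'a::{real_inner,complete_space} \<Rightarrow>\<^sub>L 'a"
  assumes A: "pos_def_op A" and B: "pos_def_op B" and l: "0 < l" and "loewner_le A (l *\<^sub>R B)"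
  shows "loewner_le (op_inv B) (l *\<^sub>R op_inv A)"
proof -
  have "loewner_le ((1 / l) *\<^sub>R op_inv B) (op_inv A)"
    using op_inv_antimono[OF A pos_def_op_scaleR[OF l B] \<open>loewner_le A (l *\<^sub>R B)\<close>]
    by (simp add: op_inv_scaleR[OF B l])
  from loewner_le_scaleR[OF _ this, of l] l show ?thesis by simp
qed

lemma pos_def_op_inv:
  fixes A :: "'a::{real_inner,complete_space} \<Rightarrow>\<^sub>L 'a"
  assumes A: "pos_def_op A"
  shows "pos_def_op (op_inv A)"
proof -
  define K where "K = norm A + 1"
  have K: "0 < K" unfolding K_def by (simp add: add_nonneg_pos)
  have "loewner_le A (norm A *\<^sub>R id_blinfun)"
    using A by (simp add: loewner_le_norm_id pos_def_op_def)
  also have "loewner_le (norm A *\<^sub>R id_blinfun) (K *\<^sub>R id_blinfun)"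
    unfolding K_def by (intro loewner_le_scaleR_left_mono pos_def_op_psd pos_def_op_id) simp
  finally have "loewner_le id_blinfun (K *\<^sub>R op_inv A)"
    using op_inv_antimono_scaleR[OF A pos_def_op_id K] by (simp add: op_inv_id)
  then have "1 / K * (norm x)\<^sup>2 \<le> qform (op_inv A) x" for x
    using loewner_le_qform[of id_blinfun "K *\<^sub>R op_inv A" x] K by (simp add: field_simps)
  then show ?thesis
    using K op_inv_self_adjoint[OF A] unfolding pos_def_op_iff_qform by (auto intro!: exI[of _ "1 / K"])
qed

definition mutually_bounded :: "real \<Rightarrow> ('a::real_inner \<Rightarrow>\<^sub>L 'a) \<Rightarrow> ('a \<Rightarrow>\<^sub>L 'a) \<Rightarrow> bool" where
  "mutually_bounded l A B \<longleftrightarrow> loewner_le A (l *\<^sub>R B) \<and> loewner_le B (l *\<^sub>R A)"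

lemma mutually_bounded_mono:
  assumes "mutually_bounded l A B" "l \<le> l'" "psd_op A" "psd_op B"
  shows "mutually_bounded l' A B"
  using assms loewner_le_trans loewner_le_scaleR_left_mono unfolding mutually_bounded_def by blast

lemma mutually_bounded_add:
  "mutually_bounded l A B \<Longrightarrow> mutually_bounded l C D \<Longrightarrow> mutually_bounded l (A + C) (B + D)"
  unfolding mutually_bounded_def using loewner_le_add by (fastforce simp: scaleR_add_right)

lemma mutually_bounded_scaleR:
  assumes "0 \<le> c" "mutually_bounded l A B"
  shows "mutually_bounded l (c *\<^sub>R A) (c *\<^sub>R B)"
  using loewner_le_scaleR[OF assms(1), of A "l *\<^sub>R B"] loewner_le_scaleR[OF assms(1), of B "l *\<^sub>R A"]
    assms(2)
  unfolding mutually_bounded_def by (simp add: mult.commute)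

lemma mutually_bounded_op_inv:
  fixes A B :: "'a::{real_inner,complete_space} \<Rightarrow>\<^sub>L 'a"
  assumes "pos_def_op A" "pos_def_op B" "0 < l" "mutually_bounded l A B"
  shows "mutually_bounded l (op_inv A) (op_inv B)"
  using assms op_inv_antimono_scaleR unfolding mutually_bounded_def by blast

subsection \<open>The Thompson metric\<close>

lemma M_op_le: "0 < l \<Longrightarrow> loewner_le A (l *\<^sub>R B) \<Longrightarrow> M_op A B \<le> l"
  unfolding M_op_def by (rule cInf_lower) (auto intro: bdd_belowI[of _ 0])

lemma M_op_nonneg: "0 < l \<Longrightarrow> loewner_le A (l *\<^sub>R B) \<Longrightarrow> 0 \<le> M_op A B"
  unfolding M_op_def by (rule cInf_greatest) auto

lemma loewner_le_if_M_op_less: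
  assumes "psd_op B" "0 < l" "loewner_le A (l *\<^sub>R B)" "M_op A B < t"
  shows "loewner_le A (t *\<^sub>R B)"
proof -
  let ?T = "{t. 0 < t \<and> loewner_le A (t *\<^sub>R B)}"
  have "?T \<noteq> {}" "bdd_below ?T" using assms(2,3) by (auto intro: bdd_belowI[of _ 0])
  then obtain s where "s \<in> ?T" "s < t"
    using assms(4) unfolding M_op_def by (meson cInf_less_iff)
  moreover have "loewner_le (s *\<^sub>R B) (t *\<^sub>R B)"
    using \<open>s < t\<close> assms(1) by (simp add: loewner_le_scaleR_left_mono)
  ultimately show ?thesis using loewner_le_trans by blast
qed

lemma thompson_le_ln:
  assumes "1 \<le> l" "mutually_bounded l A B"
  shows "thompson A B \<le> ln l"
proof -
  have "ln (M_op A B) \<le> ln l" "ln (M_op B A) \<le> ln l"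
    using assms M_op_le M_op_nonneg ln_ge_zero[of l]
    unfolding mutually_bounded_def by (smt (verit) ln_0 ln_le_cancel_iff)+
  then show ?thesis unfolding thompson_def by simp
qed

lemma thompson_commute: "thompson A B = thompson B A"
  by (simp add: thompson_def max.commute)

lemma loewner_le_scaleR_limit:
  assumes "psd_op B" "\<And>t. e < t \<Longrightarrow> loewner_le A (t *\<^sub>R B)"
  shows "loewner_le A (e *\<^sub>R B)"
proof -
  have "e *\<^sub>R B - A = ((e + 1) *\<^sub>R B - A) - 1 *\<^sub>R B" by (simp add: algebra_simps)
  then have "self_adjoint_op (e *\<^sub>R B - A)"
    using assms psd_op_self_adjoint self_adjoint_op_diff self_adjoint_op_scaleR
    unfolding loewner_le_def by (metis less_add_one)
  moreover have "qform A x \<le> e * qform B x" for x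
  proof (cases "qform B x = 0")
    case True
    then show ?thesis using loewner_le_qform[OF assms(2)[of "e + 1"], of x] by simp
  next
    case False
    then have b: "0 < qform B x" using assms(1) by (simp add: psd_op_iff_qform order_less_le)
    have "qform A x / qform B x \<le> e"
    proof (rule dense_ge)
      fix t assume "e < t"
      then show "qform A x / qform B x \<le> t" using loewner_le_qform[OF assms(2), of t x] b
        by (simp add: divide_le_eq)
    qed
    then show ?thesis using b by (simp add: divide_le_eq mult.commute)
  qed
  ultimately show ?thesis by (simp add: loewner_le_def psd_op_iff_qform)
qed

lemma loewner_le_exp_thompson:
  assumes "psd_op B" "0 < l" "loewner_le A (l *\<^sub>R B)"
  shows "loewner_le A (exp (thompson A B) *\<^sub>R B)"
proof (rule loewner_le_scaleR_limit[OF assms(1)])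
  have "M_op A B \<le> exp (thompson A B)"
  proof (cases "M_op A B = 0")
    case False
    then have "0 < M_op A B" using M_op_nonneg[OF assms(2,3)] by simp
    then show ?thesis using exp_le_cancel_iff[of "ln (M_op A B)" "thompson A B"]
      by (simp add: thompson_def)
  qed simp
  then show "exp (thompson A B) < t \<Longrightarrow> loewner_le A (t *\<^sub>R B)" for t
    using loewner_le_if_M_op_less[OF assms] by simp
qed

lemma mutually_bounded_exp_thompson:
  assumes "psd_op A" "psd_op B" "0 < l" "mutually_bounded l A B"
  shows "mutually_bounded (exp (thompson A B)) A B"
proof -
  have "loewner_le A (exp (thompson A B) *\<^sub>R B)" "loewner_le B (exp (thompson B A) *\<^sub>R A)"
    using assms loewner_le_exp_thompson unfolding mutually_bounded_def by blast+
  then show ?thesis unfolding mutually_bounded_def thompson_commute[of B A] by blast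
qed

lemma pos_def_op_le_shrink_imp_trivial:
  fixes A :: "'a::real_inner \<Rightarrow>\<^sub>L 'a" and x :: 'a
  assumes "pos_def_op A" "loewner_le A (s *\<^sub>R A)" "s < 1"
  shows "x = 0"
proof -
  obtain c where c: "0 < c" "\<And>x. c * (norm x)\<^sup>2 \<le> qform A x"
    using assms(1) by (auto simp: pos_def_op_iff_qform)
  have "(1 - s) * qform A x \<le> 0"
    using loewner_le_qform[OF assms(2), of x] by (simp add: algebra_simps)
  then have "qform A x \<le> 0" using assms(3) by (simp add: mult_le_0_iff)
  then have "c * (norm x)\<^sup>2 \<le> 0" using c(2)[of x] by linarith
  then show "x = 0" using c(1) by (simp add: mult_le_0_iff)
qed

text \<open>If both \<open>M(A/B)\<close> and \<open>M(B/A)\<close> were below 1, then \<open>A \<le> t\<^sup>2 A\<close> for some \<open>t < 1\<close>, so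
  the space is trivial; but then \<open>M(A/B) = 0\<close> and \<open>ln 0 = 0\<close>.\<close>
lemma thompson_nonneg:
  fixes A B :: "'a::real_inner \<Rightarrow>\<^sub>L 'a"
  assumes A: "pos_def_op A" and B: "psd_op B" and "0 < l" "mutually_bounded l A B"
  shows "0 \<le> thompson A B"
proof (rule ccontr)
  assume "\<not> 0 \<le> thompson A B"
  then have "ln (M_op A B) < 0" "ln (M_op B A) < 0" by (auto simp: thompson_def)
  moreover have "0 \<le> M_op A B" "0 \<le> M_op B A"
    using assms M_op_nonneg unfolding mutually_bounded_def by blast+
  ultimately have M: "0 < M_op A B" "M_op A B < 1" "0 < M_op B A" "M_op B A < 1"
    by (auto simp: order_le_less)
  define t where "t = (max (M_op A B) (M_op B A) + 1) / 2"
  have t: "M_op A B < t" "M_op B A < t" "0 < t" "t < 1" using M unfolding t_def by auto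
  have "loewner_le A (t *\<^sub>R B)" "loewner_le B (t *\<^sub>R A)"
    using assms pos_def_op_psd loewner_le_if_M_op_less t unfolding mutually_bounded_def by blast+
  then have "loewner_le A ((t * t) *\<^sub>R A)"
    using loewner_le_trans loewner_le_scaleR[of t] t(3) by fastforce
  moreover have "t * t < 1" using t(3,4) mult_strict_mono[of t 1 t 1] by simp
  ultimately have "x = 0" for x :: 'a
    using pos_def_op_le_shrink_imp_trivial[OF A] by blast
  then have "qform C x = 0" for C :: "'a \<Rightarrow>\<^sub>L 'a" and x
    by (simp add: qform_def \<open>x = 0\<close>)
  then have "loewner_le A ((M_op A B / 2) *\<^sub>R B)"
    using A B by (simp add: loewner_le_iff_qform pos_def_op_def psd_op_self_adjoint self_adjoint_op_scaleR)
  then show False using M_op_le[of "M_op A B / 2" A B] M(1) by simp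
qed

subsection \<open>The contraction estimate\<close>

text \<open>With \<open>k = (t - 1) / (a + 1)\<close> one has \<open>l (Y + Z) - (X + Z) = (t Y - X) + k (a Z - Y)\<close>
  for \<open>l = (a t + 1) / (a + 1)\<close>, a sum of two positive semidefinite operators.\<close>
lemma loewner_le_add_contract:
  assumes "loewner_le X (t *\<^sub>R Y)" "loewner_le Y (a *\<^sub>R Z)" "1 \<le> t" "0 \<le> a"
  shows "loewner_le (X + Z) (((a * t + 1) / (a + 1)) *\<^sub>R (Y + Z))"
proof -
  define k where "k = (t - 1) / (a + 1)"
  define l where "l = (a * t + 1) / (a + 1)"
  have k: "0 \<le> k" "l = t - k" "l = 1 + k * a"
    using assms(3,4) unfolding k_def l_def by (auto simp: field_simps)
  have "l *\<^sub>R (Y + Z) - (X + Z) = (t - k) *\<^sub>R Y + (1 + k * a) *\<^sub>R Z - (X + Z)"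
    by (metis k(2,3) scaleR_add_right)
  also have "\<dots> = (t *\<^sub>R Y - X) + k *\<^sub>R (a *\<^sub>R Z - Y)"
    by (simp add: algebra_simps)
  finally have "l *\<^sub>R (Y + Z) - (X + Z) = (t *\<^sub>R Y - X) + k *\<^sub>R (a *\<^sub>R Z - Y)" .
  moreover have "psd_op ((t *\<^sub>R Y - X) + k *\<^sub>R (a *\<^sub>R Z - Y))"
    using assms(1,2) k(1) by (simp add: loewner_le_def psd_op_add psd_op_scaleR)
  ultimately show ?thesis unfolding loewner_le_def l_def[symmetric] by (simp only:)
qed

lemma mutually_bounded_add_contract:
  assumes "mutually_bounded t P Q" "loewner_le P (a *\<^sub>R Z)" "loewner_le Q (a *\<^sub>R Z)" "1 \<le> t" "0 \<le> a"
  shows "mutually_bounded ((a * t + 1) / (a + 1)) (P + Z) (Q + Z)"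
  using assms loewner_le_add_contract unfolding mutually_bounded_def by blast

lemma ln_contraction_bound:
  fixes a t :: real
  assumes t: "1 \<le> t" "t \<le> a"
  shows "ln ((a * t + 1) / (a + 1)) \<le> (1 - 1 / ((a + 1) * a)) * ln t"
proof -
  define l where "l = (a * t + 1) / (a + 1)"
  have a: "1 \<le> a" using t by simp
  have "0 < a * t" using t a by simp
  then have l: "0 < l" unfolding l_def using a by simp
  have "ln l = ln t + ln (l / t)" using l t by (simp add: ln_div)
  moreover have "ln (l / t) \<le> l / t - 1" using l t by (intro ln_le_minus_one) simp
  moreover have "l / t - 1 = - ((t - 1) / ((a + 1) * t))"
  proof -
    have "0 < t + a * t" using a t by (simp add: add_pos_nonneg)
    then show ?thesis unfolding l_def by (simp add: field_simps add_divide_distrib[symmetric])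
  qed
  moreover have "ln t / ((a + 1) * a) \<le> (t - 1) / ((a + 1) * t)"
  proof -
    have "ln t / ((a + 1) * a) \<le> ln t / ((a + 1) * t)"
      using t a by (intro divide_left_mono mult_left_mono mult_pos_pos) auto
    also have "\<dots> \<le> (t - 1) / ((a + 1) * t)"
      using ln_le_minus_one[of t] t a by (intro divide_right_mono) auto
    finally show ?thesis .
  qed
  ultimately have "ln l \<le> ln t - ln t / ((a + 1) * a)" by linarith
  also have "\<dots> = (1 - 1 / ((a + 1) * a)) * ln t" by (simp add: algebra_simps)
  finally show ?thesis unfolding l_def .
qed

lemma contraction_factor_bounds:
  fixes a :: real
  assumes "1 \<le> a"
  shows "0 < 1 - 1 / ((a + 1) * a)" "1 - 1 / ((a + 1) * a) < 1"
proof -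
  have "2 \<le> (a + 1) * a" using mult_mono[of 2 "a + 1" 1 a] assms by simp
  then show "0 < 1 - 1 / ((a + 1) * a)" "1 - 1 / ((a + 1) * a) < 1" by simp_all
qed

subsection \<open>Order intervals between multiples of the identity\<close>

abbreviation scalar_interval :: "real \<Rightarrow> real \<Rightarrow> ('a::real_inner \<Rightarrow>\<^sub>L 'a) set" where
  "scalar_interval c d \<equiv> order_interval (c *\<^sub>R id_blinfun) (d *\<^sub>R id_blinfun)"

lemma scalar_interval_self_adjoint:
  assumes "X \<in> scalar_interval c d"
  shows "self_adjoint_op X"
proof -
  have "self_adjoint_op (X - c *\<^sub>R id_blinfun)"
    using assms by (simp add: order_interval_def loewner_le_def psd_op_def)
  then have "self_adjoint_op ((X - c *\<^sub>R id_blinfun) + c *\<^sub>R id_blinfun)"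
    by (intro self_adjoint_op_add self_adjoint_op_scaleR self_adjoint_op_id)
  then show ?thesis by simp
qed

lemma scalar_interval_pos_def:
  assumes "0 < c" "X \<in> scalar_interval c d"
  shows "pos_def_op X"
  using assms scalar_interval_self_adjoint[OF assms(2)] loewner_le_qform[of "c *\<^sub>R id_blinfun" X]
  by (auto simp: pos_def_op_iff_qform order_interval_def)

lemma scalar_interval_mutually_bounded:
  fixes X Y :: "'a::real_inner \<Rightarrow>\<^sub>L 'a"
  assumes "0 < c" "d \<le> a * c" "0 \<le> a" "X \<in> scalar_interval c d" "Y \<in> scalar_interval c d"
  shows "mutually_bounded a X Y"
proof -
  have "loewner_le U (a *\<^sub>R V)"
    if "U \<in> scalar_interval c d" "V \<in> scalar_interval c d" for U V :: "'a \<Rightarrow>\<^sub>L 'a"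
  proof -
    have "loewner_le U (d *\<^sub>R id_blinfun)" using that by (simp add: order_interval_def)
    also have "loewner_le (d *\<^sub>R id_blinfun) ((a * c) *\<^sub>R id_blinfun)"
      using assms(2) by (intro loewner_le_scaleR_left_mono pos_def_op_psd pos_def_op_id)
    also have "loewner_le ((a * c) *\<^sub>R id_blinfun) (a *\<^sub>R V)"
      using loewner_le_scaleR[OF assms(3), of "c *\<^sub>R id_blinfun" V] that
      by (simp add: order_interval_def)
    finally show ?thesis .
  qed
  then show ?thesis using assms(4,5) by (simp add: mutually_bounded_def)
qed

lemma scalar_interval_op_inv:
  fixes X :: "'a::{real_inner,complete_space} \<Rightarrow>\<^sub>L 'a"
  assumes "0 < c" "c \<le> d" "X \<in> scalar_interval c d"
  shows "op_inv X \<in> scalar_interval (1 / d) (1 / c)"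
proof -
  have X: "pos_def_op X" by (rule scalar_interval_pos_def[OF assms(1,3)])
  have "0 < d" using assms(1,2) by simp
  then have cI: "pos_def_op (c *\<^sub>R id_blinfun)" and dI: "pos_def_op (d *\<^sub>R id_blinfun)"
    using assms(1) pos_def_op_scaleR pos_def_op_id by blast+
  have "loewner_le (op_inv X) (op_inv (c *\<^sub>R id_blinfun))"
    using op_inv_antimono[OF cI X] assms(3) by (simp add: order_interval_def)
  moreover have "loewner_le (op_inv (d *\<^sub>R id_blinfun)) (op_inv X)"
    using op_inv_antimono[OF X dI] assms(3) by (simp add: order_interval_def)
  ultimately show ?thesis
    by (simp add: order_interval_def op_inv_id op_inv_scaleR[OF pos_def_op_id assms(1)]
        op_inv_scaleR[OF pos_def_op_id \<open>0 < d\<close>])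
qed

lemma scalar_interval_thompson_le:
  fixes X Y :: "'a::{real_inner,complete_space} \<Rightarrow>\<^sub>L 'a"
  assumes "0 < c" "c \<le> d" "X \<in> scalar_interval c d" "Y \<in> scalar_interval c d"
    and "thompson X Y \<le> r"
  shows "0 \<le> r" "mutually_bounded (exp r) X Y" "mutually_bounded (exp r) (op_inv X) (op_inv Y)"
proof -
  have X: "pos_def_op X" and Y: "pos_def_op Y"
    using assms scalar_interval_pos_def by blast+
  have "mutually_bounded (d / c) X Y"
    using assms(1-4) by (intro scalar_interval_mutually_bounded) auto
  moreover have "0 < d / c" using assms(1,2) by simp
  ultimately have "0 \<le> thompson X Y" "mutually_bounded (exp (thompson X Y)) X Y"
    using X Y pos_def_op_psd by (blast intro: thompson_nonneg mutually_bounded_exp_thompson)+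
  then show "0 \<le> r" "mutually_bounded (exp r) X Y"
    using assms(5) X Y pos_def_op_psd by (auto intro: mutually_bounded_mono)
  then show "mutually_bounded (exp r) (op_inv X) (op_inv Y)"
    using X Y by (simp add: mutually_bounded_op_inv)
qed

lemma scalar_interval_sum_contract:
  fixes P Q Z :: "'a::real_inner \<Rightarrow>\<^sub>L 'a"
  assumes "0 < c" "c \<le> d" "d \<le> a * c"
    and "P \<in> scalar_interval c d" "Q \<in> scalar_interval c d" "Z \<in> scalar_interval c d"
    and "0 \<le> r" "mutually_bounded (exp r) P Q"
  shows "\<exists>l\<ge>1. ln l \<le> (1 - 1 / ((a + 1) * a)) * r \<and> mutually_bounded l (P + Z) (Q + Z)"
proof -
  have "c * 1 \<le> c * a" using assms(2,3) by (simp add: mult.commute)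
  then have "1 \<le> a" using assms(1) by (simp only: mult_le_cancel_left_pos)
  define t where "t = min (exp r) a"
  have t: "1 \<le> t" "t \<le> a" using \<open>1 \<le> a\<close> assms(7) unfolding t_def by auto
  have "ln t \<le> ln (exp r)" using t(1) unfolding t_def by (subst ln_le_cancel_iff) auto
  then have "ln t \<le> r" by simp
  have "mutually_bounded t P Q"
    using assms scalar_interval_mutually_bounded[of c d a P Q] \<open>1 \<le> a\<close> unfolding t_def min_def by auto
  moreover have "mutually_bounded a P Z" "mutually_bounded a Q Z"
    using assms(1-6) \<open>1 \<le> a\<close> by (auto intro: scalar_interval_mutually_bounded)
  then have "loewner_le P (a *\<^sub>R Z)" "loewner_le Q (a *\<^sub>R Z)"
    unfolding mutually_bounded_def by auto
  ultimately have "mutually_bounded ((a * t + 1) / (a + 1)) (P + Z) (Q + Z)"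
    using t \<open>1 \<le> a\<close> by (intro mutually_bounded_add_contract) auto
  moreover have "1 \<le> (a * t + 1) / (a + 1)" using t \<open>1 \<le> a\<close> by simp
  moreover have "ln ((a * t + 1) / (a + 1)) \<le> (1 - 1 / ((a + 1) * a)) * r"
    using ln_contraction_bound[OF t(1,2)] mult_left_mono[OF \<open>ln t \<le> r\<close> less_imp_le[OF contraction_factor_bounds(1)]]
      \<open>1 \<le> a\<close> by (meson order_trans)
  ultimately show ?thesis by blast
qed

subsection \<open>The arithmetic and harmonic means\<close>

lemma arith_mean_commute: "arith_mean X Y = arith_mean Y X"
  by (simp add: arith_mean_def add.commute)

lemma harm_mean_commute: "harm_mean X Y = harm_mean Y X"
  by (simp add: harm_mean_def add.commute)

lemma thompson_arith_mean_le:
  assumes "1 \<le> l" "mutually_bounded l (X1 + X2) (Y1 + Y2)"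
  shows "thompson (arith_mean X1 X2) (arith_mean Y1 Y2) \<le> ln l"
  unfolding arith_mean_def using assms by (intro thompson_le_ln mutually_bounded_scaleR) auto

lemma thompson_harm_mean_le:
  fixes X1 X2 Y1 Y2 :: "'a::{real_inner,complete_space} \<Rightarrow>\<^sub>L 'a"
  assumes "pos_def_op X1" "pos_def_op X2" "pos_def_op Y1" "pos_def_op Y2"
    and "1 \<le> l" "mutually_bounded l (op_inv X1 + op_inv X2) (op_inv Y1 + op_inv Y2)"
  shows "thompson (harm_mean X1 X2) (harm_mean Y1 Y2) \<le> ln l"
proof -
  have "pos_def_op (op_inv X1 + op_inv X2)" "pos_def_op (op_inv Y1 + op_inv Y2)"
    using assms(1-4) by (simp_all add: pos_def_op_add_psd pos_def_op_inv pos_def_op_psd)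
  then show ?thesis
    unfolding harm_mean_def using assms(5,6)
    by (intro thompson_le_ln mutually_bounded_scaleR mutually_bounded_op_inv) auto
qed

lemma coord_contractive_mean_if_commute:
  assumes "\<And>X Y. \<mu> X Y = \<mu> Y X"
    and "\<And>X Y Z. X \<in> S \<Longrightarrow> Y \<in> S \<Longrightarrow> Z \<in> S \<Longrightarrow> thompson (\<mu> X Z) (\<mu> Y Z) \<le> \<rho> * thompson X Y"
  shows "coord_contractive_mean \<rho> S \<mu>"
  using assms unfolding coord_contractive_mean_def by metis

lemma scalar_interval_arith_mean_contract:
  fixes X Y Z :: "'a::{real_inner,complete_space} \<Rightarrow>\<^sub>L 'a"
  assumes "0 < c" "c \<le> d" "d \<le> a * c"
    and "X \<in> scalar_interval c d" "Y \<in> scalar_interval c d" "Z \<in> scalar_interval c d"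
  shows "thompson (arith_mean X Z) (arith_mean Y Z) \<le> (1 - 1 / ((a + 1) * a)) * thompson X Y"
proof -
  obtain l where l: "1 \<le> l" "ln l \<le> (1 - 1 / ((a + 1) * a)) * thompson X Y"
    "mutually_bounded l (X + Z) (Y + Z)"
    using scalar_interval_sum_contract[OF assms]
      scalar_interval_thompson_le(1,2)[OF assms(1,2,4,5) order_refl] by blast
  then show ?thesis using thompson_arith_mean_le[OF l(1,3)] by linarith
qed

lemma scalar_interval_harm_mean_contract:
  fixes X Y Z :: "'a::{real_inner,complete_space} \<Rightarrow>\<^sub>L 'a"
  assumes "0 < c" "c \<le> d" "d \<le> a * c"
    and "X \<in> scalar_interval c d" "Y \<in> scalar_interval c d" "Z \<in> scalar_interval c d"
  shows "thompson (harm_mean X Z) (harm_mean Y Z) \<le> (1 - 1 / ((a + 1) * a)) * thompson X Y"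
proof -
  have inv: "0 < 1 / d" "1 / d \<le> 1 / c" "1 / c \<le> a * (1 / d)"
    using assms(1-3) by (simp_all add: field_simps)
  obtain l where l: "1 \<le> l" "ln l \<le> (1 - 1 / ((a + 1) * a)) * thompson X Y"
    "mutually_bounded l (op_inv X + op_inv Z) (op_inv Y + op_inv Z)"
    using scalar_interval_sum_contract[OF inv scalar_interval_op_inv[OF assms(1,2)]
        scalar_interval_op_inv[OF assms(1,2)] scalar_interval_op_inv[OF assms(1,2)]]
      scalar_interval_thompson_le(1,3)[OF assms(1,2,4,5) order_refl] assms(4-6) by blast
  moreover have "pos_def_op X" "pos_def_op Y" "pos_def_op Z"
    using assms scalar_interval_pos_def by blast+
  ultimately show ?thesis using thompson_harm_mean_le[of X Z Y Z l] by linarith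
qed

lemma scalar_interval_arith_mean_nonexpansive:
  fixes X1 X2 Y1 Y2 :: "'a::{real_inner,complete_space} \<Rightarrow>\<^sub>L 'a"
  assumes "0 < c" "c \<le> d" "X1 \<in> scalar_interval c d" "X2 \<in> scalar_interval c d"
    "Y1 \<in> scalar_interval c d" "Y2 \<in> scalar_interval c d"
  shows "thompson (arith_mean X1 X2) (arith_mean Y1 Y2) \<le> max (thompson X1 Y1) (thompson X2 Y2)"
proof -
  let ?m = "max (thompson X1 Y1) (thompson X2 Y2)"
  have "0 \<le> ?m" "mutually_bounded (exp ?m) X1 Y1" "mutually_bounded (exp ?m) X2 Y2"
    using scalar_interval_thompson_le[OF assms(1,2,3,5), of ?m]
      scalar_interval_thompson_le[OF assms(1,2,4,6), of ?m] by auto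
  then show ?thesis
    using thompson_arith_mean_le[of "exp ?m"] mutually_bounded_add[of "exp ?m" X1 Y1 X2 Y2] by simp
qed

lemma scalar_interval_harm_mean_nonexpansive:
  fixes X1 X2 Y1 Y2 :: "'a::{real_inner,complete_space} \<Rightarrow>\<^sub>L 'a"
  assumes "0 < c" "c \<le> d" "X1 \<in> scalar_interval c d" "X2 \<in> scalar_interval c d"
    "Y1 \<in> scalar_interval c d" "Y2 \<in> scalar_interval c d"
  shows "thompson (harm_mean X1 X2) (harm_mean Y1 Y2) \<le> max (thompson X1 Y1) (thompson X2 Y2)"
proof -
  let ?m = "max (thompson X1 Y1) (thompson X2 Y2)"
  have "0 \<le> ?m" "mutually_bounded (exp ?m) (op_inv X1) (op_inv Y1)"
    "mutually_bounded (exp ?m) (op_inv X2) (op_inv Y2)"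
    using scalar_interval_thompson_le[OF assms(1,2,3,5), of ?m]
      scalar_interval_thompson_le[OF assms(1,2,4,6), of ?m] by auto
  moreover have "pos_def_op X1" "pos_def_op X2" "pos_def_op Y1" "pos_def_op Y2"
    using assms scalar_interval_pos_def by blast+
  ultimately show ?thesis
    using thompson_harm_mean_le[of X1 X2 Y1 Y2 "exp ?m"]
      mutually_bounded_add[of "exp ?m" "op_inv X1" "op_inv Y1" "op_inv X2" "op_inv Y2"] by simp
qed

theorem lemma10p3:
  fixes n :: nat
  assumes "n \<ge> 1"
  shows "\<exists>\<rho>::real. 0 < \<rho> \<and> \<rho> < 1 \<and>
    (let S = order_interval ((1 / real n) *\<^sub>R (id_blinfun :: 'a::{real_inner,complete_space} \<Rightarrow>\<^sub>L 'a))
                            (real n *\<^sub>R id_blinfun)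
     in S \<subseteq> Omega \<and>
        coord_contractive_mean \<rho> S arith_mean \<and> nonexpansive_mean S arith_mean \<and>
        coord_contractive_mean \<rho> S harm_mean \<and> nonexpansive_mean S harm_mean)"
proof -
  define a where "a = (real n)\<^sup>2"
  define \<rho> where "\<rho> = 1 - 1 / ((a + 1) * a)"
  define S where "S = (scalar_interval (1 / real n) (real n) :: ('a \<Rightarrow>\<^sub>L 'a) set)"
  have "1 \<le> real n" using assms by simp
  then have n: "0 < 1 / real n" "1 / real n \<le> real n" "real n \<le> a * (1 / real n)"
    unfolding a_def by (simp_all add: power2_eq_square order_trans[of _ 1])
  have "1 \<le> a" using \<open>1 \<le> real n\<close> unfolding a_def by simp
  then have "0 < \<rho>" "\<rho> < 1" unfolding \<rho>_def by (rule contraction_factor_bounds)+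
  moreover have "S \<subseteq> Omega"
    using scalar_interval_pos_def[OF n(1)] by (auto simp: S_def Omega_def)
  moreover have "coord_contractive_mean \<rho> S arith_mean" "coord_contractive_mean \<rho> S harm_mean"
    unfolding \<rho>_def S_def
    by (intro coord_contractive_mean_if_commute arith_mean_commute harm_mean_commute
        scalar_interval_arith_mean_contract[OF n] scalar_interval_harm_mean_contract[OF n]; assumption)+
  moreover have "nonexpansive_mean S arith_mean" "nonexpansive_mean S harm_mean"
    using scalar_interval_arith_mean_nonexpansive[OF n(1,2)] scalar_interval_harm_mean_nonexpansive[OF n(1,2)]
    by (auto simp: S_def nonexpansive_mean_def)
  ultimately show ?thesis unfolding S_def Let_def by blast
qed

end
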